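(* Let $N, M_d\ge 1$ be integers, let $P_s,P_r,\sigma_r^2,\sigma_d^2>0$ and $\varepsilon\ge 0$ be real numbers, let $\tilde{\mathbf H}_{rd}\in\mathbb C^{M_d\times N}$ and let $\mathbf g\in\mathbb C^{N}$ with $\mathbf g\neq\mathbf 0$. Consider the optimization problem $$\max_{\mathbf W\in\mathbb C^{N\times N},\,\mathbf r\in\mathbb C^{M_d}}\ \min_{\Delta\mathbf H\in\mathbb C^{M_d\times N},\ \|\Delta \mathbf H\|_F\leq \varepsilon}\ \frac{P_s|\mathbf r^H(\tilde {\mathbf H}_{rd}+\Delta \mathbf H)\mathbf W\mathbf g|^2}{\sigma_r^2\|\mathbf r^H(\tilde {\mathbf H}_{rd}+\Delta \mathbf H)\mathbf W\|_2^2+\sigma_d^2}$$ subject to $[P_s\mathbf W\mathbf g\mathbf g^H\mathbf W^H+\sigma_r^2\mathbf W\mathbf W^H]_{i,i}\leq P_r$ for all $i=1,\dots,N$, and $\|\mathbf r\|_2=1$. Then the optimal $\mathbf W$ of this problem is given by $$\mathbf W=\frac{\tilde P_r}{\|\mathbf g\|_2}\,\mathbf w\, \mathbf g^H$$ for some $\mathbf w=[w_1,\dots,w_N]^T\in\mathbb C^N$, where $\tilde P_r= \sqrt{\frac{P_r}{P_s\|\mathbf g\|_2^2+\sigma_r^2}}$.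
   Context: $[\mathbf A]_{i,i}$ denotes the $i$-th diagonal entry of a matrix $\mathbf A$; $(\cdot)^H$ is the conjugate transpose; $\|\cdot\|_2$ is the Euclidean norm and $\|\cdot\|_F$ the Frobenius norm. This problem models a two-hop amplify-and-forward relay with $N$ relay antennas, relay beamforming matrix $\mathbf W$, receive beamformer $\mathbf r$, effective first-hop channel $\mathbf g$, estimated second-hop channel $\tilde{\mathbf H}_{rd}$ with norm-bounded error $\Delta\mathbf H$, and per-antenna relay power limit $P_r$. *)

theory Defs
  imports "HOL-Analysis.Analysis"
begin

text \<open>Matrices are complex^'cols^'rows (A $ i $ j is the entry in row i, column j);
  column vectors are complex^'k.  The dimensions N and M_d are the cardinalities
  of the finite index types.\<close>

definition conj_transpose :: "complex^'n^'m \<Rightarrow> complex^'m^'n" where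
  "conj_transpose A = (\<chi> i j. cnj (A $ j $ i))"

definition outer :: "complex^'m \<Rightarrow> complex^'n \<Rightarrow> complex^'n^'m" where
  "outer x y = (\<chi> i j. x $ i * cnj (y $ j))"

definition hinner :: "complex^'m \<Rightarrow> complex^'m \<Rightarrow> complex" where
  "hinner r x = (\<Sum>i\<in>UNIV. cnj (r $ i) * x $ i)"

text \<open>r^H A, represented as a vector (the entries of the row vector)\<close>
definition hrow :: "complex^'m \<Rightarrow> complex^'n^'m \<Rightarrow> complex^'n" where
  "hrow r A = (\<chi> j. \<Sum>i\<in>UNIV. cnj (r $ i) * A $ i $ j)"

definition frob_norm :: "complex^'n^'m \<Rightarrow> real" where
  "frob_norm A = sqrt (\<Sum>i\<in>UNIV. \<Sum>j\<in>UNIV. (cmod (A $ i $ j))\<^sup>2)"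

definition sinr :: "real \<Rightarrow> real \<Rightarrow> real \<Rightarrow> complex^'n^'m \<Rightarrow> complex^'n
     \<Rightarrow> complex^'n^'n \<Rightarrow> complex^'m \<Rightarrow> complex^'n^'m \<Rightarrow> real" where
  "sinr Ps sr sd Ht g W r dH =
     Ps * (cmod (hinner r (((Ht + dH) ** W) *v g)))\<^sup>2 /
     (sr\<^sup>2 * (norm (hrow r ((Ht + dH) ** W)))\<^sup>2 + sd\<^sup>2)"

definition robust_sinr :: "real \<Rightarrow> real \<Rightarrow> real \<Rightarrow> real \<Rightarrow> complex^'n^'m \<Rightarrow> complex^'n
     \<Rightarrow> complex^'n^'n \<Rightarrow> complex^'m \<Rightarrow> real" where
  "robust_sinr Ps sr sd eps Ht g W r =
     (INF dH \<in> {dH :: complex^'n^'m. frob_norm dH \<le> eps}. sinr Ps sr sd Ht g W r dH)"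

text \<open>Feasibility: per-antenna relay power constraint and unit-norm receive beamformer.
  The diagonal entries of the Hermitian matrix are real, so comparing the real part is exact.\<close>
definition feasible :: "real \<Rightarrow> real \<Rightarrow> real \<Rightarrow> complex^'n \<Rightarrow> complex^'n^'n \<Rightarrow> complex^'m \<Rightarrow> bool" where
  "feasible Ps Pr sr g W r \<longleftrightarrow>
     (\<forall>i. Re (((of_real Ps) *s (W ** outer g g ** conj_transpose W)
              + (of_real (sr\<^sup>2)) *s (W ** conj_transpose W)) $ i $ i) \<le> Pr)
     \<and> norm r = 1"

end

theory Submission
  imports Defs
begin

text \<open>Let \<open>P = g g\<^sup>H / \<parallel>g\<parallel>\<^sup>2\<close> be the orthogonal projector onto the span of \<open>g\<close>.
  Replacing \<open>W\<close> by \<open>W P\<close> leaves \<open>W g\<close>, hence the signal term, unchanged, while every row of \<open>W\<close>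
  and the row vector \<open>r\<^sup>H (H + \<Delta>H) W\<close> can only shrink under right multiplication by \<open>P\<close>.
  So \<open>W P\<close> is still feasible and has at least the same SINR for every channel error.
  The worst-case SINR, an infimum of continuous functions, is upper semicontinuous and attains
  its maximum on the compact feasible set; projecting a maximiser gives an optimal
  \<open>W P = (W g / \<parallel>g\<parallel>\<^sup>2) g\<^sup>H\<close>, which has the claimed form.\<close>

lemma compact_attains_sup_closed_superlevel:
  fixes F :: "'a::topological_space \<Rightarrow> real"
  assumes "compact K" "K \<noteq> {}" "bdd_above (F ` K)"
    and closed: "\<And>t. closed {x \<in> K. t \<le> F x}"
  shows "\<exists>x\<in>K. \<forall>y\<in>K. F y \<le> F x"
proof -
  define S where "S = (SUP x\<in>K. F x)"
  define C where "C t = {x \<in> K. t \<le> F x}" for t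
  have C_nonempty: "C t \<noteq> {}" if "t < S" for t
  proof -
    obtain x where "x \<in> K" "t < F x"
      using \<open>t < S\<close> less_cSUP_iff[OF \<open>K \<noteq> {}\<close> \<open>bdd_above (F ` K)\<close>] unfolding S_def by blast
    then show ?thesis
      unfolding C_def by (blast intro: less_imp_le)
  qed
  have C_antimono: "C t \<subseteq> C s" if "s \<le> t" for s t
    using order_trans[OF that] unfolding C_def by blast
  have "K \<inter> (\<Inter>t\<in>{..<S}. C t) \<noteq> {}"
  proof (rule compact_imp_fip_image[OF \<open>compact K\<close>])
    show "closed (C t)" for t
      unfolding C_def by (rule closed)
    fix T assume "finite T" "T \<subseteq> {..<S}"
    show "K \<inter> (\<Inter>t\<in>T. C t) \<noteq> {}"
    proof (cases "T = {}")
      case False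
      have "C (Max T) \<subseteq> C t" if "t \<in> T" for t
        using C_antimono Max_ge[OF \<open>finite T\<close> that] by blast
      moreover have "C (Max T) \<subseteq> K"
        unfolding C_def by blast
      moreover have "Max T < S"
        using False \<open>finite T\<close> \<open>T \<subseteq> {..<S}\<close> by auto
      ultimately show ?thesis
        using C_nonempty by blast
    qed (use \<open>K \<noteq> {}\<close> in simp)
  qed
  then obtain x where "x \<in> K" and x_in_C: "\<And>t. t < S \<Longrightarrow> x \<in> C t"
    by blast
  have "S \<le> F x"
    by (rule dense_le) (use x_in_C in \<open>simp add: C_def\<close>)
  moreover have "F y \<le> S" if "y \<in> K" for y
    unfolding S_def using that \<open>bdd_above (F ` K)\<close> by (rule cSUP_upper)
  ultimately show ?thesis
    using \<open>x \<in> K\<close> by (meson order_trans)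
qed

text \<open>The infimum of a family of continuous functions is upper semicontinuous.\<close>

lemma compact_attains_sup_INF:
  fixes f :: "'d \<Rightarrow> 'a::t2_space \<Rightarrow> real"
  assumes "compact K" "K \<noteq> {}" "D \<noteq> {}"
    and cont: "\<And>d. d \<in> D \<Longrightarrow> continuous_on K (f d)"
    and bdd: "\<And>x. x \<in> K \<Longrightarrow> bdd_below ((\<lambda>d. f d x) ` D)"
  shows "\<exists>x\<in>K. \<forall>y\<in>K. (INF d\<in>D. f d y) \<le> (INF d\<in>D. f d x)"
proof (rule compact_attains_sup_closed_superlevel[OF \<open>compact K\<close> \<open>K \<noteq> {}\<close>])
  obtain d0 where "d0 \<in> D"
    using \<open>D \<noteq> {}\<close> by blast
  have "bdd_above (f d0 ` K)"
    using cont[OF \<open>d0 \<in> D\<close>] \<open>compact K\<close>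
    by (intro bounded_imp_bdd_above compact_imp_bounded compact_continuous_image)
  then obtain B where B: "\<And>x. x \<in> K \<Longrightarrow> f d0 x \<le> B"
    by (auto simp: bdd_above_def)
  show "bdd_above ((\<lambda>x. INF d\<in>D. f d x) ` K)"
  proof (rule bdd_aboveI2)
    fix x assume "x \<in> K"
    show "(INF d\<in>D. f d x) \<le> B"
      using cINF_lower[OF bdd[OF \<open>x \<in> K\<close>] \<open>d0 \<in> D\<close>] B[OF \<open>x \<in> K\<close>] by (rule order_trans)
  qed
  fix t
  have "closed {x \<in> K. t \<le> f d x}" if "d \<in> D" for d
    using continuous_on_const cont[OF that] compact_imp_closed[OF \<open>compact K\<close>]
    by (rule continuous_on_closed_Collect_le)
  moreover have "{x \<in> K. t \<le> (INF d\<in>D. f d x)} = K \<inter> (\<Inter>d\<in>D. {x \<in> K. t \<le> f d x})"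
    using le_cINF_iff[OF \<open>D \<noteq> {}\<close> bdd] by auto
  ultimately show "closed {x \<in> K. t \<le> (INF d\<in>D. f d x)}"
    using compact_imp_closed[OF \<open>compact K\<close>] by (simp add: closed_INT closed_Int)
qed

lemma norm_vec_power2: "(norm (x :: complex^'n))\<^sup>2 = (\<Sum>i\<in>UNIV. (cmod (x $ i))\<^sup>2)"
  unfolding norm_vec_def L2_set_def by (simp add: sum_nonneg)

lemma norm_sum_mult_le: "cmod (\<Sum>j\<in>UNIV. x $ j * y $ j) \<le> norm x * norm (y :: complex^'n)"
proof -
  have "cmod (\<Sum>j\<in>UNIV. x $ j * y $ j) \<le> (\<Sum>j\<in>UNIV. \<bar>cmod (x $ j)\<bar> * \<bar>cmod (y $ j)\<bar>)"
    by (rule order_trans[OF norm_sum]) (simp add: norm_mult)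
  also have "\<dots> \<le> L2_set (\<lambda>j. cmod (x $ j)) UNIV * L2_set (\<lambda>j. cmod (y $ j)) UNIV"
    by (rule L2_set_mult_ineq)
  finally show ?thesis by (simp add: norm_vec_def)
qed

lemma hinner_self: "hinner x x = of_real ((norm x)\<^sup>2)"
  by (simp add: hinner_def norm_vec_power2 complex_norm_square mult.commute del: of_real_power)

lemma matrix_matrix_mult_nth: "(A ** B) $ i = A $ i v* B"
  by (simp add: vec_eq_iff matrix_matrix_mult_def vector_matrix_mult_def mult.commute)

lemma hrow_matrix_mult: "hrow r (A ** B) = hrow r A v* B"
proof -
  have "(\<Sum>i\<in>UNIV. cnj (r $ i) * (\<Sum>k\<in>UNIV. A $ i $ k * B $ k $ j))
      = (\<Sum>i\<in>UNIV. \<Sum>k\<in>UNIV. cnj (r $ i) * A $ i $ k * B $ k $ j)" for j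
    by (simp add: sum_distrib_left mult.assoc)
  also have "\<dots> j = (\<Sum>k\<in>UNIV. (\<Sum>i\<in>UNIV. cnj (r $ i) * A $ i $ k) * B $ k $ j)" for j
    by (subst sum.swap) (simp add: sum_distrib_right)
  finally show ?thesis
    by (simp add: vec_eq_iff hrow_def matrix_matrix_mult_def vector_matrix_mult_def)
qed

lemma outer_scaleR_left: "outer (c *\<^sub>R x) y = c *\<^sub>R outer x y"
  by (simp add: vec_eq_iff outer_def)

lemma matrix_matrix_mult_outer: "A ** outer x y = outer (A *v x) y"
  by (simp add: vec_eq_iff outer_def matrix_matrix_mult_def matrix_vector_mult_def sum_distrib_left mult_ac)

lemma outer_matrix_vector_mult: "outer x y *v z = hinner y z *s x"
  by (simp add: vec_eq_iff outer_def hinner_def matrix_vector_mult_def sum_distrib_left mult_ac)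

lemma vector_matrix_mult_outer: "z v* outer x y = (\<chi> j. (\<Sum>i\<in>UNIV. z $ i * x $ i) * cnj (y $ j))"
  by (simp add: vec_eq_iff outer_def vector_matrix_mult_def sum_distrib_left mult_ac)

lemma norm_mult_cnj_vec: "norm (\<chi> j. c * cnj (x $ j)) = cmod c * norm (x :: complex^'n)"
proof -
  have "(norm (\<chi> j. c * cnj (x $ j)))\<^sup>2 = (cmod c * norm x)\<^sup>2"
    by (simp add: norm_vec_power2 norm_mult power_mult_distrib sum_distrib_left)
  then show ?thesis by (simp add: power2_eq_iff_nonneg)
qed

definition proj_line :: "complex^'n \<Rightarrow> complex^'n^'n" where
  "proj_line g = outer ((1 / (norm g)\<^sup>2) *\<^sub>R g) g"

lemma proj_line_matrix_vector_mult_self: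
  assumes "g \<noteq> 0"
  shows "proj_line g *v g = g"
  using assms
  by (simp add: proj_line_def outer_matrix_vector_mult hinner_self vec_eq_iff
      scaleR_conv_of_real[where 'a = complex])

lemma norm_vector_matrix_mult_proj_line_le: "norm (x v* proj_line g) \<le> norm x"
proof -
  let ?s = "\<Sum>i\<in>UNIV. x $ i * g $ i"
  have "x v* proj_line g = (\<chi> j. (?s / of_real ((norm g)\<^sup>2)) * cnj (g $ j))"
    by (simp add: proj_line_def vector_matrix_mult_outer scaleR_conv_of_real[where 'a = complex]
        sum_divide_distrib mult_ac)
  then have "norm (x v* proj_line g) = cmod ?s / (norm g)\<^sup>2 * norm g"
    by (simp only: norm_mult_cnj_vec) (simp add: norm_divide norm_power)
  also have "\<dots> = cmod ?s / norm g"
    by (simp add: power2_eq_square)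
  also have "\<dots> \<le> norm x * norm g / norm g"
    using norm_sum_mult_le[of x g] by (rule divide_right_mono) simp
  also have "\<dots> \<le> norm x"
    by (cases "g = 0") simp_all
  finally show ?thesis .
qed

definition antenna_power :: "real \<Rightarrow> real \<Rightarrow> complex^'n \<Rightarrow> complex^'n^'n \<Rightarrow> 'n \<Rightarrow> real" where
  "antenna_power Ps sr g W i = Ps * (cmod ((W *v g) $ i))\<^sup>2 + sr\<^sup>2 * (norm (W $ i))\<^sup>2"

text \<open>In \<^const>\<open>feasible\<close> the factor \<open>of_real Ps\<close> acts on a matrix through \<open>*s\<close>, so it is
  the constant vector with entries \<open>Ps\<close>.\<close>

lemma of_real_vec_nth [simp]: "(of_real c :: 'a::real_algebra_1^'n) $ i = of_real c"
  by (simp add: of_real_def)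

lemma feasible_iff:
  "feasible Ps Pr sr g W r \<longleftrightarrow> (\<forall>i. antenna_power Ps sr g W i \<le> Pr) \<and> norm r = 1"
proof -
  have signal: "(W ** outer g g ** conj_transpose W) $ i $ i = (W *v g) $ i * cnj ((W *v g) $ i)" for i
    by (simp add: matrix_matrix_mult_def matrix_vector_mult_def outer_def conj_transpose_def
        sum_distrib_left sum_distrib_right cnj_sum mult_ac)
  have noise: "(W ** conj_transpose W) $ i $ i = (\<Sum>j\<in>UNIV. W $ i $ j * cnj (W $ i $ j))" for i
    by (simp add: matrix_matrix_mult_def conj_transpose_def)
  show ?thesis
    unfolding feasible_def antenna_power_def
    by (simp add: signal noise norm_vec_power2 complex_mult_cnj cmod_power2 del: of_real_power)
qed

lemma antenna_power_proj_line_le: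
  assumes "g \<noteq> 0"
  shows "antenna_power Ps sr g (W ** proj_line g) i \<le> antenna_power Ps sr g W i"
proof -
  have "(W ** proj_line g) *v g = W *v g"
    using assms by (simp flip: matrix_vector_mul_assoc add: proj_line_matrix_vector_mult_self)
  moreover have "norm ((W ** proj_line g) $ i) \<le> norm (W $ i)"
    by (simp add: matrix_matrix_mult_nth norm_vector_matrix_mult_proj_line_le)
  ultimately show ?thesis
    unfolding antenna_power_def by (simp add: mult_left_mono power_mono)
qed

lemma feasible_proj_line:
  assumes "g \<noteq> 0" "feasible Ps Pr sr g W r"
  shows "feasible Ps Pr sr g (W ** proj_line g) r"
  using assms antenna_power_proj_line_le[OF assms(1)] by (meson feasible_iff order_trans)

lemma sinr_nonneg: "Ps \<ge> 0 \<Longrightarrow> sd > 0 \<Longrightarrow> sinr Ps sr sd Ht g W r dH \<ge> 0"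
  unfolding sinr_def by (intro divide_nonneg_pos) (auto intro: add_nonneg_pos)

lemma sinr_le_sinr_proj_line:
  assumes "g \<noteq> 0" "Ps \<ge> 0" "sd > 0"
  shows "sinr Ps sr sd Ht g W r dH \<le> sinr Ps sr sd Ht g (W ** proj_line g) r dH"
proof -
  let ?A = "Ht + dH"
  have signal: "(?A ** (W ** proj_line g)) *v g = (?A ** W) *v g"
    using assms(1)
    by (simp add: matrix_mul_assoc proj_line_matrix_vector_mult_self flip: matrix_vector_mul_assoc)
  have "norm (hrow r (?A ** (W ** proj_line g))) \<le> norm (hrow r (?A ** W))"
    by (simp add: matrix_mul_assoc hrow_matrix_mult norm_vector_matrix_mult_proj_line_le)
  then have "sr\<^sup>2 * (norm (hrow r (?A ** (W ** proj_line g))))\<^sup>2 + sd\<^sup>2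
      \<le> sr\<^sup>2 * (norm (hrow r (?A ** W)))\<^sup>2 + sd\<^sup>2"
    by (simp add: mult_left_mono power_mono)
  moreover have "0 < sr\<^sup>2 * a\<^sup>2 + sd\<^sup>2" for a
    using assms(3) by (simp add: add_nonneg_pos)
  ultimately show ?thesis
    unfolding sinr_def signal using assms(2) by (intro divide_left_mono) (auto intro: mult_pos_pos)
qed

lemma robust_sinr_le_robust_sinr_proj_line:
  fixes Ht :: "complex^'n^'m"
  assumes "g \<noteq> 0" "Ps \<ge> 0" "sd > 0"
  shows "robust_sinr Ps sr sd eps Ht g W r \<le> robust_sinr Ps sr sd eps Ht g (W ** proj_line g) r"
  unfolding robust_sinr_def
proof (cases "{dH :: complex^'n^'m. frob_norm dH \<le> eps} = {}")
  case False
  show "(INF dH \<in> {dH. frob_norm dH \<le> eps}. sinr Ps sr sd Ht g W r dH)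
      \<le> (INF dH \<in> {dH. frob_norm dH \<le> eps}. sinr Ps sr sd Ht g (W ** proj_line g) r dH)"
    using assms sinr_nonneg[OF assms(2,3)]
    by (intro cINF_mono[OF False] bdd_belowI2[where m = 0]) (auto intro: sinr_le_sinr_proj_line)
qed simp

lemma continuous_on_sinr [continuous_intros]:
  assumes "sd > 0" "continuous_on S W" "continuous_on S r"
  shows "continuous_on S (\<lambda>x. sinr Ps sr sd Ht g (W x) (r x) dH)"
proof -
  have "sr\<^sup>2 * a\<^sup>2 + sd\<^sup>2 \<noteq> 0" for a
    using assms(1) by (metis add_nonneg_pos less_irrefl mult_nonneg_nonneg zero_le_power2 zero_less_power2)
  then show ?thesis
    unfolding sinr_def hinner_def hrow_def matrix_matrix_mult_def matrix_vector_mult_def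
    using assms(2,3) by (intro continuous_intros) auto
qed

lemma compact_antenna_power_le:
  fixes g :: "complex^'n"
  assumes "Ps \<ge> 0" "sr > 0"
  shows "compact {W. \<forall>i. antenna_power Ps sr g W i \<le> Pr}"
proof (rule compact_eq_bounded_closed[THEN iffD2], rule conjI)
  let ?row_bound = "sqrt (Pr / sr\<^sup>2)"
  have "norm W \<le> CARD('n) * ?row_bound" if "\<forall>i. antenna_power Ps sr g W i \<le> Pr" for W :: "complex^'n^'n"
  proof -
    have "norm (W $ i) \<le> ?row_bound" for i
    proof -
      have "0 \<le> Ps * (cmod ((W *v g) $ i))\<^sup>2"
        using assms(1) by simp
      then have "sr\<^sup>2 * (norm (W $ i))\<^sup>2 \<le> Pr"
        using that[rule_format, of i] unfolding antenna_power_def by linarith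
      then show ?thesis
        using assms(2) by (simp add: real_le_rsqrt le_divide_eq mult.commute)
    qed
    then have "(\<Sum>i\<in>UNIV. norm (W $ i)) \<le> CARD('n) * ?row_bound"
      using sum_bounded_above[of UNIV "\<lambda>i. norm (W $ i)"] by simp
    then show ?thesis
      by (rule order_trans[rotated]) (simp add: norm_vec_def L2_set_le_sum)
  qed
  then show "bounded {W. \<forall>i. antenna_power Ps sr g W i \<le> Pr}"
    unfolding bounded_iff by blast
  show "closed {W. \<forall>i. antenna_power Ps sr g W i \<le> Pr}"
    unfolding antenna_power_def matrix_vector_mult_def
    by (intro closed_Collect_all closed_Collect_le continuous_intros)
qed

lemma feasible_set_eq:
  "{(W, r). feasible Ps Pr sr g W r} = {W. \<forall>i. antenna_power Ps sr g W i \<le> Pr} \<times> sphere 0 1"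
  by (auto simp: feasible_iff)

lemma compact_feasible_set:
  assumes "Ps \<ge> 0" "sr > 0"
  shows "compact {(W, r). feasible Ps Pr sr g W r}"
  unfolding feasible_set_eq using assms by (intro compact_Times compact_antenna_power_le compact_sphere)

lemma proj_line_eq_scaled_outer:
  assumes "c \<noteq> 0"
  shows "W ** proj_line g = c *\<^sub>R outer ((1 / c) *\<^sub>R (W *v ((1 / (norm g)\<^sup>2) *\<^sub>R g))) g"
  unfolding proj_line_def matrix_matrix_mult_outer outer_scaleR_left[of "1 / c"] scaleR_scaleR
  using assms by simp

lemma robust_sinr_attains_max:
  fixes Ht :: "complex^'n^'m" and g :: "complex^'n"
  assumes "Ps \<ge> 0" "Pr \<ge> 0" "sr > 0" "sd > 0" "eps \<ge> 0"
  obtains W r where "feasible Ps Pr sr g W r"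
    and "\<And>W' r'. feasible Ps Pr sr g W' r' \<Longrightarrow>
           robust_sinr Ps sr sd eps Ht g W' r' \<le> robust_sinr Ps sr sd eps Ht g W r"
proof -
  let ?K = "{(W, r :: complex^'m). feasible Ps Pr sr g W r}"
  let ?D = "{dH :: complex^'n^'m. frob_norm dH \<le> eps}"
  define f where "f dH = (\<lambda>(W, r). sinr Ps sr sd Ht g W r dH)" for dH
  have "\<exists>p\<in>?K. \<forall>q\<in>?K. (INF dH\<in>?D. f dH q) \<le> (INF dH\<in>?D. f dH p)"
  proof (rule compact_attains_sup_INF)
    show "compact ?K"
      using assms(1,3) by (rule compact_feasible_set)
    have "sphere (0 :: complex^'m) 1 \<noteq> {}"
      by simp
    then obtain r0 :: "complex^'m" where "r0 \<in> sphere 0 1"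
      by blast
    then have "(0, r0) \<in> ?K"
      using assms(2) by (simp add: feasible_iff antenna_power_def)
    then show "?K \<noteq> {}"
      by blast
    have "0 \<in> ?D"
      using assms(5) by (simp add: frob_norm_def)
    then show "?D \<noteq> {}"
      by blast
    show "continuous_on ?K (f dH)" for dH
      unfolding f_def split_beta' using assms(4) by (intro continuous_intros)
    show "bdd_below ((\<lambda>dH. f dH p) ` ?D)" for p
      using assms(1,4) by (intro bdd_belowI2[where m = 0]) (simp add: f_def split_beta' sinr_nonneg)
  qed
  then obtain p where "p \<in> ?K"
    and max: "\<And>q. q \<in> ?K \<Longrightarrow> (INF dH\<in>?D. f dH q) \<le> (INF dH\<in>?D. f dH p)"
    by blast
  obtain W r where p: "p = (W, r)"
    by (cases p)
  show ?thesis
  proof (rule that)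
    show "feasible Ps Pr sr g W r"
      using \<open>p \<in> ?K\<close> p by simp
    show "robust_sinr Ps sr sd eps Ht g W' r' \<le> robust_sinr Ps sr sd eps Ht g W r"
      if "feasible Ps Pr sr g W' r'" for W' r'
      using max[of "(W', r')"] that p by (simp add: robust_sinr_def f_def)
  qed
qed

theorem lemma1:
  fixes Ps Pr sigma_r sigma_d eps :: real
    and Ht :: "complex^'n^'m" and g :: "complex^'n"
  assumes "Ps > 0" and "Pr > 0" and "sigma_r > 0" and "sigma_d > 0" and "eps \<ge> 0"
    and "g \<noteq> 0"
  shows "\<exists>(W :: complex^'n^'n) (r :: complex^'m) (w :: complex^'n).
           feasible Ps Pr sigma_r g W r
         \<and> W = (sqrt (Pr / (Ps * (norm g)\<^sup>2 + sigma_r\<^sup>2)) / norm g) *\<^sub>R outer w g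
         \<and> (\<forall>(W' :: complex^'n^'n) (r' :: complex^'m). feasible Ps Pr sigma_r g W' r' \<longrightarrow>
               robust_sinr Ps sigma_r sigma_d eps Ht g W' r'
                 \<le> robust_sinr Ps sigma_r sigma_d eps Ht g W r)"
proof -
  have "Ps \<ge> 0" "Pr \<ge> 0"
    using assms(1,2) by simp_all
  then obtain W r where "feasible Ps Pr sigma_r g W r" and opt:
    "\<And>W' r'. feasible Ps Pr sigma_r g W' r' \<Longrightarrow>
       robust_sinr Ps sigma_r sigma_d eps Ht g W' r' \<le> robust_sinr Ps sigma_r sigma_d eps Ht g W r"
    using robust_sinr_attains_max[OF _ _ assms(3-5), where Ht = Ht and g = g] by blast
  let ?c = "sqrt (Pr / (Ps * (norm g)\<^sup>2 + sigma_r\<^sup>2)) / norm g"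
  have "Ps * (norm g)\<^sup>2 + sigma_r\<^sup>2 > 0"
    using assms by (intro add_pos_pos mult_pos_pos) auto
  then have "?c \<noteq> 0"
    using assms(2,6) by simp
  show ?thesis
  proof (intro exI conjI allI impI)
    show "feasible Ps Pr sigma_r g (W ** proj_line g) r"
      using assms(6) \<open>feasible Ps Pr sigma_r g W r\<close> by (rule feasible_proj_line)
    show "W ** proj_line g = ?c *\<^sub>R outer ((1 / ?c) *\<^sub>R (W *v ((1 / (norm g)\<^sup>2) *\<^sub>R g))) g"
      using \<open>?c \<noteq> 0\<close> by (rule proj_line_eq_scaled_outer)
    fix W' and r' :: "complex^'m"
    assume "feasible Ps Pr sigma_r g W' r'"
    then have "robust_sinr Ps sigma_r sigma_d eps Ht g W' r' \<le> robust_sinr Ps sigma_r sigma_d eps Ht g W r"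
      by (rule opt)
    also have "\<dots> \<le> robust_sinr Ps sigma_r sigma_d eps Ht g (W ** proj_line g) r"
      using assms(6) \<open>Ps \<ge> 0\<close> assms(4) by (rule robust_sinr_le_robust_sinr_proj_line)
    finally show "robust_sinr Ps sigma_r sigma_d eps Ht g W' r'
        \<le> robust_sinr Ps sigma_r sigma_d eps Ht g (W ** proj_line g) r" .
  qed
qed

end
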